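(* Let $t$ be a positive integer, let $\overline{\mathcal{G}}_t$, $\overline{\mathcal{P}}_t$ and $\phi:\overline{\mathcal{G}}_t\to\overline{\mathcal{P}}_t$ be as described in the context, let $\pi\in\overline{\mathcal{G}}_t$ and $\mu=\phi(\pi)$. Then (i) $\ell(\pi)\le \ell(\mu)$; (ii) $\ell(\pi)\ge \ell(\mu)-m(\mu)+\delta_{\ell(\mu),m(\mu)}$, where $\delta$ is the Kronecker delta.
   Context: An overpartition is a partition (weakly decreasing sequence of positive integers) in which the first occurrence of each distinct part size may be overlined; an overlined part $\overline{a}$ has size $a$. $\ell(\lambda)$ is the number of parts of $\lambda$; for $\mu\in\overline{\mathcal{P}}_t$, $m(\mu)$ is the number of parts of $\mu$ equal to $t$. $\overline{\mathcal{G}}_t$ is the set of nonempty overpartitions whose largest and smallest parts differ by at most $t$, with the largest part not overlined whenever this difference is exactly $t$. $\overline{\mathcal{P}}_t$ is the set of nonempty overpartitions with all parts at most $t$ and no part equal to $t$ overlined. For $\pi=(\pi_1,\dots,\pi_\ell)\in\overline{\mathcal{G}}_t$, let $s=\lfloor \pi_\ell/t\rfloor$ and let $k$ be the positive integer with $\pi_k\ge (s+1)t>\pi_{k+1}$ if it exists, $k=0$ otherwise; then $\phi(\pi)$ is the overpartition $(t,\dots,t,\ \pi_{k+1}-st,\dots,\pi_\ell-st,\ \pi_1-(s+1)t,\dots,\pi_k-(s+1)t)$ with exactly $s(\ell-k)+(s+1)k$ initial non-overlined parts equal to $t$, where each $\pi_i-st$ or $\pi_i-(s+1)t$ is overlined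 exactly when $\pi_i$ is, and all parts equal to $0$ are deleted. (This $\phi(\pi)$ lies in $\overline{\mathcal{P}}_t$.) *)

theory Defs
  imports Main
begin

text \<open>An overpartition is represented as a list of parts, each part a pair
(size, overlined flag), listed in weakly decreasing order of size.\<close>

type_synonym overpartition = "(nat \<times> bool) list"

definition is_overpartition :: "overpartition \<Rightarrow> bool" where
  "is_overpartition lam \<longleftrightarrow>
     sorted_wrt (\<lambda>a b. fst a \<ge> fst b) lam \<and>
     (\<forall>p \<in> set lam. fst p > 0) \<and>
     (\<forall>i. 0 < i \<and> i < length lam \<and> fst (lam ! i) = fst (lam ! (i - 1)) \<longrightarrow> \<not> snd (lam ! i))"

abbreviation num_parts :: "overpartition \<Rightarrow> nat" where
  "num_parts lam \<equiv> length lam"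

definition G_bar :: "nat \<Rightarrow> overpartition set" where
  "G_bar t = {\<pi>. is_overpartition \<pi> \<and> \<pi> \<noteq> [] \<and>
       fst (hd \<pi>) - fst (last \<pi>) \<le> t \<and>
       (fst (hd \<pi>) - fst (last \<pi>) = t \<longrightarrow> \<not> snd (hd \<pi>))}"

definition P_bar :: "nat \<Rightarrow> overpartition set" where
  "P_bar t = {\<mu>. is_overpartition \<mu> \<and> \<mu> \<noteq> [] \<and>
       (\<forall>p \<in> set \<mu>. fst p \<le> t \<and> (fst p = t \<longrightarrow> \<not> snd p))}"

definition mult_t :: "nat \<Rightarrow> overpartition \<Rightarrow> nat" where
  "mult_t t \<mu> = length (filter (\<lambda>p. fst p = t) \<mu>)"

text \<open>The map phi. s = floor(smallest part / t); k = number of parts \<ge> (s+1)t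
 (these are the first k parts, as the list is decreasing and the smallest part is < (s+1)t).\<close>
definition phi :: "nat \<Rightarrow> overpartition \<Rightarrow> overpartition" where
  "phi t \<pi> =
     (let l = length \<pi>;
          s = fst (last \<pi>) div t;
          k = length (takeWhile (\<lambda>p. fst p \<ge> (s + 1) * t) \<pi>)
      in filter (\<lambda>p. fst p \<noteq> 0)
          (replicate (s * (l - k) + (s + 1) * k) (t, False)
           @ map (\<lambda>p. (fst p - s * t, snd p)) (drop k \<pi>)
           @ map (\<lambda>p. (fst p - (s + 1) * t, snd p)) (take k \<pi>)))"

end

theory Submission
  imports Defs
begin

text \<open>With \<open>s\<close> and \<open>k\<close> as in the definition of \<open>\<phi>\<close>, the overpartition \<open>\<phi>(\<pi>)\<close> consists of
  \<open>N = s(\<ell> - k) + (s + 1)k\<close> copies of \<open>t\<close>, followed by at most \<open>\<ell>\<close> further parts (one for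
  each nonvanishing shifted part of \<open>\<pi>\<close>). Hence \<open>\<ell>(\<mu>) - m(\<mu>) \<le> \<ell>(\<mu>) - N \<le> \<ell>(\<pi>)\<close>. Conversely
  \<open>N \<ge> \<ell>(\<pi>)\<close> unless \<open>s = 0\<close>, and if \<open>s = 0\<close> the parts \<open>\<pi>\<^sub>i\<close> with \<open>i > k\<close> are not shifted at all,
  so together with the \<open>k\<close> copies of \<open>t\<close> they already give \<open>\<ell>(\<pi>)\<close> parts of \<open>\<mu>\<close>.
  The Kronecker delta only matters when \<open>\<ell>(\<mu>) = m(\<mu>)\<close>, and then it asks for \<open>\<ell>(\<pi>) \<ge> 1\<close>.\<close>

lemma phi_eq_replicate_append:
  fixes t s k :: nat and \<pi> :: overpartition
  assumes "t > 0"
    and "s = fst (last \<pi>) div t"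
    and "k = length (takeWhile (\<lambda>p. fst p \<ge> (s + 1) * t) \<pi>)"
  shows "phi t \<pi> = replicate (s * (length \<pi> - k) + (s + 1) * k) (t, False)
           @ filter (\<lambda>p. fst p \<noteq> 0) (map (\<lambda>p. (fst p - s * t, snd p)) (drop k \<pi>))
           @ filter (\<lambda>p. fst p \<noteq> 0) (map (\<lambda>p. (fst p - (s + 1) * t, snd p)) (take k \<pi>))"
  using assms by (simp add: phi_def Let_def)

lemma length_phi_le_mult_t_add_length:
  fixes t :: nat and \<pi> :: overpartition
  assumes "t > 0"
  shows "length (phi t \<pi>) \<le> mult_t t (phi t \<pi>) + length \<pi>"
proof -
  define s where "s = fst (last \<pi>) div t"
  define k where "k = length (takeWhile (\<lambda>p. fst p \<ge> (s + 1) * t) \<pi>)"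
  define N where "N = s * (length \<pi> - k) + (s + 1) * k"
  have phi: "phi t \<pi> = replicate N (t, False)
      @ filter (\<lambda>p. fst p \<noteq> 0) (map (\<lambda>p. (fst p - s * t, snd p)) (drop k \<pi>))
      @ filter (\<lambda>p. fst p \<noteq> 0) (map (\<lambda>p. (fst p - (s + 1) * t, snd p)) (take k \<pi>))"
    using phi_eq_replicate_append[OF assms s_def k_def] unfolding N_def .
  have filter_map_le: "length (filter P (map f xs)) \<le> length xs" for P f and xs :: overpartition
    using length_filter_le[of P "map f xs"] by simp
  have "N \<le> mult_t t (phi t \<pi>)"
    unfolding mult_t_def phi by simp
  moreover have "length (phi t \<pi>) \<le> N + (length (drop k \<pi>) + length (take k \<pi>))"
    unfolding phi length_append length_replicate by (intro add_mono order.refl filter_map_le)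
  ultimately show ?thesis
    by auto
qed

lemma length_le_length_phi:
  fixes t :: nat and \<pi> :: overpartition
  assumes "t > 0" and parts_pos: "\<forall>p \<in> set \<pi>. fst p > 0"
  shows "length \<pi> \<le> length (phi t \<pi>)"
proof -
  define s where "s = fst (last \<pi>) div t"
  define k where "k = length (takeWhile (\<lambda>p. fst p \<ge> (s + 1) * t) \<pi>)"
  define N where "N = s * (length \<pi> - k) + (s + 1) * k"
  define B where "B = map (\<lambda>p. (fst p - s * t, snd p)) (drop k \<pi>)"
  have k_le: "k \<le> length \<pi>"
    unfolding k_def by (rule length_takeWhile_le)
  have "phi t \<pi> = replicate N (t, False) @ filter (\<lambda>p. fst p \<noteq> 0) B
      @ filter (\<lambda>p. fst p \<noteq> 0) (map (\<lambda>p. (fst p - (s + 1) * t, snd p)) (take k \<pi>))"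
    using phi_eq_replicate_append[OF assms(1) s_def k_def] unfolding N_def B_def .
  then have len_phi: "N + length (filter (\<lambda>p. fst p \<noteq> 0) B) \<le> length (phi t \<pi>)"
    by simp
  show ?thesis
  proof (cases "s = 0")
    case True
    then have "filter (\<lambda>p. fst p \<noteq> 0) B = B"
      unfolding B_def using parts_pos by (auto simp: filter_id_conv dest: in_set_dropD)
    then show ?thesis
      using len_phi True k_le by (simp add: N_def B_def)
  next
    case False
    then have "length \<pi> - k \<le> s * (length \<pi> - k)" and "k \<le> (s + 1) * k"
      by simp_all
    then have "length \<pi> \<le> N"
      using k_le unfolding N_def by linarith
    then show ?thesis
      using len_phi by linarith
  qed
qed

theorem mainTheorem3:
  fixes t :: nat and \<pi> \<mu> :: overpartition
  assumes "t > 0"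
    and "\<pi> \<in> G_bar t"
    and "\<mu> = phi t \<pi>"
  shows "num_parts \<pi> \<le> num_parts \<mu> \<and>
         int (num_parts \<pi>) \<ge> int (num_parts \<mu>) - int (mult_t t \<mu>)
           + (if num_parts \<mu> = mult_t t \<mu> then 1 else 0)"
proof -
  have "\<pi> \<noteq> []" and parts_pos: "\<forall>p \<in> set \<pi>. fst p > 0"
    using assms(2) by (auto simp: G_bar_def is_overpartition_def)
  then have "length \<pi> \<ge> 1"
    by (simp add: Suc_le_eq)
  moreover have "length \<pi> \<le> length \<mu>"
    using length_le_length_phi[OF assms(1) parts_pos] assms(3) by simp
  moreover have "length \<mu> \<le> mult_t t \<mu> + length \<pi>"
    using length_phi_le_mult_t_add_length[OF assms(1)] assms(3) by simp
  ultimately show ?thesis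
    by auto
qed

end
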